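(* Let $L$ be a lattice with canonical extension $L^\delta$, and let $K(L^\delta)$ denote the set of closed elements of $L^\delta$. If $k\in K(L^\delta)$ is finitely prime and $o=\bigvee\{b\in L \mid b\not\geq k\}$ (join computed in $L^\delta$), then $k\not\leq o$.
   Context: The canonical extension of a lattice $L$ is a complete lattice $L^\delta$ containing $L$ as a sublattice such that (denseness) every element of $L^\delta$ is a join of meets of elements of $L$ and a meet of joins of elements of $L$, and (compactness) for all $S,T\subseteq L$, if $\bigwedge S\leq\bigvee T$ in $L^\delta$ then $\bigwedge S'\leq\bigvee T'$ for some finite $S'\subseteq S$, $T'\subseteq T$. $K(L^\delta)$ is the set of elements of $L^\delta$ that are meets of subsets of $L$ (closed elements). An element $u\in L^\delta$ is finitely prime if $u\neq\bot$ and for all $v,w\in L^\delta$, $u\leq v\vee w$ implies $u\leq v$ or $u\leq w$. *)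

theory Defs
  imports Main
begin

text \<open>A lattice L is modelled as a nonempty subset of a complete lattice 'a (playing the
role of L^delta) that is closed under binary meet and join (a sublattice).\<close>

definition sublattice :: "'a::complete_lattice set \<Rightarrow> bool" where
  "sublattice L \<longleftrightarrow> L \<noteq> {} \<and> (\<forall>a\<in>L. \<forall>b\<in>L. inf a b \<in> L \<and> sup a b \<in> L)"

definition canonical_extension :: "'a::complete_lattice set \<Rightarrow> bool" where
  "canonical_extension L \<longleftrightarrow>
     sublattice L \<and>
     (\<forall>x::'a. \<exists>F. (\<forall>S\<in>F. S \<subseteq> L) \<and> x = Sup (Inf ` F)) \<and>
     (\<forall>x::'a. \<exists>F. (\<forall>T\<in>F. T \<subseteq> L) \<and> x = Inf (Sup ` F)) \<and>
     (\<forall>S T. S \<subseteq> L \<longrightarrow> T \<subseteq> L \<longrightarrow> Inf S \<le> Sup T \<longrightarrow>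
        (\<exists>S' T'. finite S' \<and> finite T' \<and> S' \<subseteq> S \<and> T' \<subseteq> T \<and> Inf S' \<le> Sup T'))"

definition closed_elements :: "'a::complete_lattice set \<Rightarrow> 'a set" where
  "closed_elements L = {x. \<exists>S. S \<subseteq> L \<and> x = Inf S}"

definition finitely_prime :: "'a::complete_lattice \<Rightarrow> bool" where
  "finitely_prime u \<longleftrightarrow> u \<noteq> bot \<and> (\<forall>v w. u \<le> sup v w \<longrightarrow> u \<le> v \<or> u \<le> w)"

end

theory Submission
  imports Defs
begin

text \<open>If k \<le> ob, compactness (k being a meet of elements of L) puts k below a finite join of
  elements b of L with k not below b; finite primeness of k then puts k below one of them.\<close>

lemma finitely_prime_le_Sup_finite:
  fixes k :: "'a::complete_lattice"
  assumes prime: "finitely_prime k" and "finite T" and "k \<le> Sup T"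
  shows "\<exists>b\<in>T. k \<le> b"
  using \<open>finite T\<close> \<open>k \<le> Sup T\<close>
proof (induction T rule: finite_induct)
  case empty
  then show ?case using prime by (simp add: finitely_prime_def bot_unique)
next
  case (insert x F)
  then have "k \<le> sup x (Sup F)" by simp
  then have "k \<le> x \<or> k \<le> Sup F" using prime by (simp add: finitely_prime_def)
  then show ?case using insert.IH by blast
qed

lemma canonical_extension_closed_le_Sup_finite:
  assumes "canonical_extension L" and "k \<in> closed_elements L"
    and "T \<subseteq> L" and "k \<le> Sup T"
  shows "\<exists>T'. finite T' \<and> T' \<subseteq> T \<and> k \<le> Sup T'"
proof -
  obtain S where S: "S \<subseteq> L" "k = Inf S"
    using assms(2) by (auto simp: closed_elements_def)
  have "\<exists>S' T'. finite S' \<and> finite T' \<and> S' \<subseteq> S \<and> T' \<subseteq> T \<and> Inf S' \<le> Sup T'"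
    using assms(1,3,4) S unfolding canonical_extension_def by simp
  then obtain S' T' where "S' \<subseteq> S" "finite T'" "T' \<subseteq> T" "Inf S' \<le> Sup T'"
    by blast
  moreover have "k \<le> Inf S'" using S \<open>S' \<subseteq> S\<close> by (simp add: Inf_superset_mono)
  ultimately show ?thesis by (meson order_trans)
qed

theorem lemma2p3:
  fixes L :: "'a::complete_lattice set" and k ob :: 'a
  assumes "canonical_extension L"
    and "k \<in> closed_elements L"
    and "finitely_prime k"
    and "ob = Sup {b \<in> L. \<not> k \<le> b}"
  shows "\<not> k \<le> ob"
proof
  assume "k \<le> ob"
  obtain T where T: "finite T" "T \<subseteq> {b \<in> L. \<not> k \<le> b}" "k \<le> Sup T"
    using canonical_extension_closed_le_Sup_finite[OF assms(1,2) _ \<open>k \<le> ob\<close>[unfolded assms(4)]]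
    by blast
  then obtain b where "b \<in> T" "k \<le> b"
    using finitely_prime_le_Sup_finite[OF assms(3)] by blast
  with T(2) show False by blast
qed

end
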